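(* Let $R$ be a commutative ring with identity and $M$ a non-zero comultiplication $R$-module with $\mathrm{Min}(M)=\{S_i\}_{i\in I}$, where $|I|>1$ and the $S_i$ are pairwise distinct. If $\Lambda$ is a non-empty proper finite subset of $I$, then $\sum_{\lambda\in\Lambda}S_\lambda$ is a non-large submodule of $M$.
   Context: An $R$-module $M$ is a comultiplication module if for every submodule $N$ of $M$ there is an ideal $I$ of $R$ with $N=\mathrm{Ann}_M(I)=\{m\in M: Im=0\}$. A submodule $N$ of $M$ is large (essential) in $M$ if $N\cap L\neq 0$ for every non-zero submodule $L$ of $M$. $\mathrm{Min}(M)$ denotes the set of minimal (i.e. simple) submodules of $M$. *)

theory Defs
  imports Complex_Main
begin

text \<open>Modules: R is a type of class comm_ring_1, M a type of class ab_group_add,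
  with scalar multiplication scale satisfying the module axioms (locale module).\<close>

definition is_ideal :: "'a::comm_ring_1 set \<Rightarrow> bool" where
  "is_ideal I \<longleftrightarrow> 0 \<in> I \<and> (\<forall>x\<in>I. \<forall>y\<in>I. x + y \<in> I) \<and> (\<forall>r. \<forall>x\<in>I. r * x \<in> I)"

definition annM :: "('a::comm_ring_1 \<Rightarrow> 'b::ab_group_add \<Rightarrow> 'b) \<Rightarrow> 'a set \<Rightarrow> 'b set" where
  "annM scale I = {m. \<forall>a\<in>I. scale a m = 0}"

definition comultiplication_module :: "('a::comm_ring_1 \<Rightarrow> 'b::ab_group_add \<Rightarrow> 'b) \<Rightarrow> bool" where
  "comultiplication_module scale \<longleftrightarrow>
     (\<forall>N. module.subspace scale N \<longrightarrow> (\<exists>I. is_ideal I \<and> N = annM scale I))"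

definition large_submodule :: "('a::comm_ring_1 \<Rightarrow> 'b::ab_group_add \<Rightarrow> 'b) \<Rightarrow> 'b set \<Rightarrow> bool" where
  "large_submodule scale N \<longleftrightarrow> module.subspace scale N \<and>
     (\<forall>L. module.subspace scale L \<and> L \<noteq> {0} \<longrightarrow> N \<inter> L \<noteq> {0})"

definition minimal_submodules :: "('a::comm_ring_1 \<Rightarrow> 'b::ab_group_add \<Rightarrow> 'b) \<Rightarrow> 'b set set" where
  "minimal_submodules scale = {S. module.subspace scale S \<and> S \<noteq> {0} \<and>
     (\<forall>L. module.subspace scale L \<and> L \<subseteq> S \<longrightarrow> L = {0} \<or> L = S)}"

end

theory Submission
  imports Defs
begin

text \<open>In a comultiplication module every submodule N equals Ann_M(Ann_R(N)), so inclusions of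
  submodules are reflected by reverse inclusions of their annihilator ideals. The annihilator of a
  simple submodule is a prime ideal. If a simple S_j lay inside the sum of finitely many S_\<lambda>,
  the intersection of their annihilators would lie in Ann(S_j), and prime avoidance would give
  Ann(S_\<lambda>) \<subseteq> Ann(S_j) for some \<lambda>, hence S_j \<subseteq> S_\<lambda> and S_j = S_\<lambda>. So any S_j with
  j \<notin> \<Lambda> meets the sum trivially.\<close>

definition annR :: "('a::comm_ring_1 \<Rightarrow> 'b::ab_group_add \<Rightarrow> 'b) \<Rightarrow> 'b set \<Rightarrow> 'a set" where
  "annR scale N = {r. \<forall>m\<in>N. scale r m = 0}"

lemma prod_notin_prime:
  fixes P :: "'a::comm_ring_1 set"
  assumes "1 \<notin> P" and "\<And>a b. a * b \<in> P \<Longrightarrow> a \<notin> P \<Longrightarrow> b \<in> P"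
    and "finite F" and "\<And>x. x \<in> F \<Longrightarrow> f x \<notin> P"
  shows "prod f F \<notin> P"
  using assms(3,4)
proof (induction F rule: finite_induct)
  case (insert x F)
  then have "f x \<notin> P" and "prod f F \<notin> P" by simp_all
  with assms(2)[of "f x" "prod f F"] show ?case
    using insert.hyps by auto
qed (use assms(1) in simp)

lemma prime_avoidance_Inter:
  fixes P :: "'a::comm_ring_1 set" and J :: "'i \<Rightarrow> 'a set"
  assumes "1 \<notin> P" and "\<And>a b. a * b \<in> P \<Longrightarrow> a \<notin> P \<Longrightarrow> b \<in> P"
    and "finite \<Lambda>" and "\<And>l. l \<in> \<Lambda> \<Longrightarrow> is_ideal (J l)"
    and "(\<Inter>l\<in>\<Lambda>. J l) \<subseteq> P"
  shows "\<exists>l\<in>\<Lambda>. J l \<subseteq> P"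
proof (rule ccontr)
  assume "\<not> (\<exists>l\<in>\<Lambda>. J l \<subseteq> P)"
  then have "\<forall>l\<in>\<Lambda>. \<exists>a. a \<in> J l \<and> a \<notin> P" by blast
  then obtain f where f: "\<And>l. l \<in> \<Lambda> \<Longrightarrow> f l \<in> J l \<and> f l \<notin> P"
    by metis
  have "prod f \<Lambda> \<notin> P"
    by (rule prod_notin_prime[OF assms(1) _ assms(3)]) (use assms(2) f in blast)+
  moreover have "prod f \<Lambda> \<in> J l" if "l \<in> \<Lambda>" for l
  proof -
    have "prod f \<Lambda> = prod f (\<Lambda> - {l}) * f l"
      using that assms(3) by (simp add: prod.remove mult.commute)
    with f[OF that] assms(4)[OF that] show ?thesis
      unfolding is_ideal_def by simp
  qed
  ultimately show False using assms(5) by blast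
qed

context module
begin

lemma subspace_kernel_scale: "subspace {m. scale r m = 0}"
  using module_hom.subspace_vimage[OF module_hom_scale_self subspace_single_0, of r]
  by (simp add: vimage_def)

lemma annR_span: "annR scale (span X) = annR scale X"
proof
  show "annR scale (span X) \<subseteq> annR scale X"
    using span_superset unfolding annR_def by blast
  show "annR scale X \<subseteq> annR scale (span X)"
    using span_minimal[OF _ subspace_kernel_scale] unfolding annR_def by blast
qed

lemma is_ideal_annR: "is_ideal (annR scale N)"
  unfolding is_ideal_def annR_def by (simp add: scale_left_distrib flip: scale_scale)

lemma one_notin_annR: "N \<noteq> {0} \<Longrightarrow> 0 \<in> N \<Longrightarrow> 1 \<notin> annR scale N"
  unfolding annR_def by auto

lemma annM_annR_eq:
  assumes "comultiplication_module scale" and "subspace N"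
  shows "annM scale (annR scale N) = N"
proof
  obtain J where "N = annM scale J"
    using assms unfolding comultiplication_module_def by blast
  moreover from this have "J \<subseteq> annR scale N"
    unfolding annR_def annM_def by blast
  ultimately show "annM scale (annR scale N) \<subseteq> N"
    unfolding annM_def by blast
qed (auto simp: annM_def annR_def)

lemma annR_minimal_prime:
  assumes S: "S \<in> minimal_submodules scale"
    and ab: "a * b \<in> annR scale S" and a: "a \<notin> annR scale S"
  shows "b \<in> annR scale S"
proof -
  have sub: "subspace S"
    using S unfolding minimal_submodules_def by blast
  \<comment> \<open>aS is a non-zero submodule of the simple module S, hence all of S\<close>
  have "subspace (scale a ` S)"
    using module_hom.subspace_image[OF module_hom_scale_self sub] .
  moreover have "scale a ` S \<subseteq> S" and "scale a ` S \<noteq> {0}"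
    using sub a subspace_scale unfolding annR_def by auto
  ultimately have aS: "scale a ` S = S"
    using S unfolding minimal_submodules_def by blast
  show ?thesis
    unfolding annR_def
  proof (intro CollectI ballI)
    fix m assume "m \<in> S"
    then obtain u where "u \<in> S" "m = scale a u" using aS by blast
    with ab show "scale b m = 0"
      unfolding annR_def by (simp add: mult.commute)
  qed
qed

lemma minimal_submodule_subset_span_eq:
  assumes comult: "comultiplication_module scale"
    and S: "S \<in> minimal_submodules scale"
    and T: "\<And>l. l \<in> \<Lambda> \<Longrightarrow> T l \<in> minimal_submodules scale"
    and "finite \<Lambda>" and S_sub: "S \<subseteq> span (\<Union>l\<in>\<Lambda>. T l)"
  shows "\<exists>l\<in>\<Lambda>. S = T l"
proof -
  have subS: "subspace S" and "S \<noteq> {0}"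
    using S unfolding minimal_submodules_def by auto
  have "(\<Inter>l\<in>\<Lambda>. annR scale (T l)) = annR scale (span (\<Union>l\<in>\<Lambda>. T l))"
    unfolding annR_span by (auto simp: annR_def)
  also have "\<dots> \<subseteq> annR scale S"
    using S_sub unfolding annR_def by blast
  finally have Inter_sub: "(\<Inter>l\<in>\<Lambda>. annR scale (T l)) \<subseteq> annR scale S" .
  have "\<exists>l\<in>\<Lambda>. annR scale (T l) \<subseteq> annR scale S"
    by (rule prime_avoidance_Inter[OF one_notin_annR[OF \<open>S \<noteq> {0}\<close> subspace_0[OF subS]] _
          \<open>finite \<Lambda>\<close> is_ideal_annR Inter_sub])
      (rule annR_minimal_prime[OF S])
  then obtain l where l: "l \<in> \<Lambda>" "annR scale (T l) \<subseteq> annR scale S" ..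
  have subT: "subspace (T l)"
    using T[OF l(1)] unfolding minimal_submodules_def by blast
  have "S = annM scale (annR scale S)"
    using annM_annR_eq[OF comult subS] by simp
  also have "\<dots> \<subseteq> annM scale (annR scale (T l))"
    using l(2) unfolding annM_def by blast
  also have "\<dots> = T l"
    using annM_annR_eq[OF comult subT] .
  finally have "S \<subseteq> T l" .
  with T[OF l(1)] subS \<open>S \<noteq> {0}\<close> have "S = T l"
    unfolding minimal_submodules_def by blast
  with l(1) show ?thesis ..
qed

lemma minimal_submodule_inter_eq_0:
  assumes "S \<in> minimal_submodules scale" and "subspace N" and "\<not> S \<subseteq> N"
  shows "N \<inter> S = {0}"
proof -
  have "subspace (N \<inter> S)" "N \<inter> S \<subseteq> S"
    using assms(1,2) subspace_inter unfolding minimal_submodules_def by auto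
  with assms(1) have "N \<inter> S = {0} \<or> N \<inter> S = S"
    unfolding minimal_submodules_def by simp
  with assms(3) show ?thesis by blast
qed

end

theorem lemma2p3:
  fixes scale :: "'a::comm_ring_1 \<Rightarrow> 'b::ab_group_add \<Rightarrow> 'b"
    and I :: "'i set" and S :: "'i \<Rightarrow> 'b set" and \<Lambda> :: "'i set"
  assumes "module scale"
    and "comultiplication_module scale"
    and "(UNIV :: 'b set) \<noteq> {0}"
    and "minimal_submodules scale = S ` I"
    and "inj_on S I"
    and "\<exists>i\<in>I. \<exists>j\<in>I. i \<noteq> j"
    and "\<Lambda> \<subseteq> I" and "\<Lambda> \<noteq> {}" and "\<Lambda> \<noteq> I" and "finite \<Lambda>"
  shows "module.subspace scale (module.span scale (\<Union>l\<in>\<Lambda>. S l))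
    \<and> \<not> large_submodule scale (module.span scale (\<Union>l\<in>\<Lambda>. S l))"
proof -
  interpret module scale by fact
  obtain j where j: "j \<in> I" "j \<notin> \<Lambda>" using assms(7,9) by blast
  have Sj: "S j \<in> minimal_submodules scale" using assms(4) j(1) by blast
  have "\<not> S j \<subseteq> span (\<Union>l\<in>\<Lambda>. S l)"
  proof
    assume "S j \<subseteq> span (\<Union>l\<in>\<Lambda>. S l)"
    then obtain l where "l \<in> \<Lambda>" "S j = S l"
      using minimal_submodule_subset_span_eq[OF assms(2) Sj _ assms(10)] assms(4,7) by blast
    with j assms(5,7) show False by (metis inj_onD subsetD)
  qed
  then have "span (\<Union>l\<in>\<Lambda>. S l) \<inter> S j = {0}"
    using minimal_submodule_inter_eq_0[OF Sj subspace_span] by blast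
  moreover have "subspace (S j)" "S j \<noteq> {0}"
    using Sj unfolding minimal_submodules_def by auto
  ultimately show ?thesis
    unfolding large_submodule_def by (auto simp: subspace_span)
qed

end
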